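(* Let $0\le\ell\le r$ and let $a_1,b_1,\dots,a_s,b_s\ge0$ be integers with $\sum_{i=1}^s a_i+\sum_{i=1}^s b_i=\ell$. Put $k=\sum_{i=1}^s a_i$. Then the ideal $S^{a_1}L^{b_1}S^{a_2}L^{b_2}\cdots S^{a_s}L^{b_s}(p)\subseteq R_\ell$ (operators applied successively starting from $(p)=p\mathbb{Z}\subseteq R_0$) depends only on $k$, and $$S^{a_1}L^{b_1}\cdots S^{a_s}L^{b_s}(p)=S^kL^{\ell-k}(p)=L^{\ell-k}S^k(p)=J_{\ell,0}(p^{k+1}).$$
   Context: Fix a prime $p$ and an integer $r\ge0$. For $0\le k\le r$ let $R_k$ be the commutative ring which is free as a $\mathbb{Z}$-module with basis $X_{k,0},\dots,X_{k,k}$ and multiplication $X_{k,i}X_{k,j}=p^{k-\max(i,j)}X_{k,\min(i,j)}$; thus $X_{k,k}=1$, and an integer $n$ is identified with $nX_{k,k}$. For $0\le k\le\ell\le r$ define: the additive map $\mathrm{ind}^\ell_k:R_k\to R_\ell$, $X_{k,i}\mapsto X_{\ell,i}$; the ring homomorphism $\mathrm{res}^\ell_k:R_\ell\to R_k$, $\mathrm{res}^\ell_k(X_{\ell,i})=p^{\ell-k}X_{k,i}$ if $i\le k$ and $=p^{\ell-i}$ if $i\ge k$; and the multiplicative map $\mathrm{jnd}^\ell_k:R_k\to R_\ell$, $$\mathrm{jnd}^\ell_k\Big(\sum_{i=0}^k m_iX_{k,i}\Big)=m_kX_{\ell,\ell}+\sum_{k\le i<\ell}\frac{m_k^{p^{\ell-i}}-m_k^{p^{\ell-i-1}}}{p^{\ell-i}}X_{\ell,i}+\sum_{0\le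 i<k}\frac{(\sum_{s=i}^k m_sp^{k-s})^{p^{\ell-k}}-(\sum_{s=i+1}^k m_sp^{k-s})^{p^{\ell-k}}}{p^{\ell-i}}X_{\ell,i}$$ ($m_i\in\mathbb{Z}$). For $1\le k\le r$ and an ideal $I\subseteq R_{k-1}$: $L(I)=(\mathrm{res}^k_{k-1})^{-1}(I)\subseteq R_k$, and $S(I)$ is the ideal of $R_k$ generated by $\mathrm{ind}^k_{k-1}(I)\cup\mathrm{jnd}^k_{k-1}(I)$; $L^n,S^n$ are iterates (each step raising the index by one). For $0\le i\le\ell$, $F_{\ell,i}=X_{\ell,i}-p^{\ell-i}$; for $0\le k\le\ell$ and $x\in\mathbb{Z}$, $J_{\ell,k}(x)\subseteq R_\ell$ is the ideal generated by $x,F_{\ell,k},\dots,F_{\ell,\ell-1}$ if $k\le\ell-1$, and $J_{\ell,\ell}(x)=xR_\ell$. *)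

theory Defs
  imports Main "HOL-Computational_Algebra.Primes"
begin

text \<open>Elements of R_k are represented as coefficient functions x :: nat => int,
  x i being the coefficient of X_{k,i}; they must vanish above k.\<close>

definition carrier_R :: "nat \<Rightarrow> (nat \<Rightarrow> int) set" where
  "carrier_R k = {x. \<forall>m>k. x m = 0}"

definition basisX :: "nat \<Rightarrow> nat \<Rightarrow> nat \<Rightarrow> int" where
  "basisX k i = (\<lambda>m. if m = i \<and> i \<le> k then 1 else 0)"

text \<open>The integer n viewed as n X_{k,k}.\<close>
definition constR :: "nat \<Rightarrow> int \<Rightarrow> nat \<Rightarrow> int" where
  "constR k n = (\<lambda>m. if m = k then n else 0)"

definition addR :: "(nat \<Rightarrow> int) \<Rightarrow> (nat \<Rightarrow> int) \<Rightarrow> nat \<Rightarrow> int" where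
  "addR x y = (\<lambda>m. x m + y m)"

text \<open>Multiplication determined by X_{k,i} X_{k,j} = p^(k - max i j) X_{k, min i j}.\<close>
definition mulR :: "nat \<Rightarrow> nat \<Rightarrow> (nat \<Rightarrow> int) \<Rightarrow> (nat \<Rightarrow> int) \<Rightarrow> nat \<Rightarrow> int" where
  "mulR p k x y = (\<lambda>m. \<Sum>i\<le>k. \<Sum>j\<le>k.
      if min i j = m then x i * y j * int p ^ (k - max i j) else 0)"

definition is_idealR :: "nat \<Rightarrow> nat \<Rightarrow> (nat \<Rightarrow> int) set \<Rightarrow> bool" where
  "is_idealR p k I \<longleftrightarrow> I \<subseteq> carrier_R k \<and> (\<lambda>m. 0) \<in> I
     \<and> (\<forall>x\<in>I. \<forall>y\<in>I. addR x y \<in> I)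
     \<and> (\<forall>x\<in>I. \<forall>y\<in>carrier_R k. mulR p k y x \<in> I)"

definition gen_idealR :: "nat \<Rightarrow> nat \<Rightarrow> (nat \<Rightarrow> int) set \<Rightarrow> (nat \<Rightarrow> int) set" where
  "gen_idealR p k A = \<Inter>{I. is_idealR p k I \<and> A \<subseteq> I}"

definition indR :: "nat \<Rightarrow> nat \<Rightarrow> (nat \<Rightarrow> int) \<Rightarrow> nat \<Rightarrow> int" where
  "indR k l x = (\<lambda>m. if m \<le> k then x m else 0)"

definition resX :: "nat \<Rightarrow> nat \<Rightarrow> nat \<Rightarrow> nat \<Rightarrow> nat \<Rightarrow> int" where
  "resX p l k i = (if i \<le> k then (\<lambda>m. int p ^ (l - k) * basisX k i m)
                   else constR k (int p ^ (l - i)))"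

definition resR :: "nat \<Rightarrow> nat \<Rightarrow> nat \<Rightarrow> (nat \<Rightarrow> int) \<Rightarrow> nat \<Rightarrow> int" where
  "resR p l k x = (\<lambda>m. \<Sum>i\<le>l. x i * resX p l k i m)"

text \<open>jnd^l_k (the divisions are exact; integer division is used).\<close>
definition jndR :: "nat \<Rightarrow> nat \<Rightarrow> nat \<Rightarrow> (nat \<Rightarrow> int) \<Rightarrow> nat \<Rightarrow> int" where
  "jndR p k l x = (\<lambda>m.
     if m = l then x k
     else if k \<le> m \<and> m < l then
       (x k ^ (p ^ (l - m)) - x k ^ (p ^ (l - m - 1))) div (int p ^ (l - m))
     else if m < k then
       ((\<Sum>s\<in>{m..k}. x s * int p ^ (k - s)) ^ (p ^ (l - k))
        - (\<Sum>s\<in>{m+1..k}. x s * int p ^ (k - s)) ^ (p ^ (l - k))) div (int p ^ (l - m))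
     else 0)"

text \<open>For 1 <= k and an ideal I of R_{k-1}: L(I) and S(I), ideals of R_k.\<close>
definition Lop :: "nat \<Rightarrow> nat \<Rightarrow> (nat \<Rightarrow> int) set \<Rightarrow> (nat \<Rightarrow> int) set" where
  "Lop p k I = {x \<in> carrier_R k. resR p k (k - 1) x \<in> I}"

definition Sop :: "nat \<Rightarrow> nat \<Rightarrow> (nat \<Rightarrow> int) set \<Rightarrow> (nat \<Rightarrow> int) set" where
  "Sop p k I = gen_idealR p k (indR (k - 1) k ` I \<union> jndR p (k - 1) k ` I)"

datatype opSL = OpS | OpL

definition apply_op :: "nat \<Rightarrow> opSL \<Rightarrow> nat \<Rightarrow> (nat \<Rightarrow> int) set \<Rightarrow> (nat \<Rightarrow> int) set" where
  "apply_op p op1 k I = (case op1 of OpS \<Rightarrow> Sop p k I | OpL \<Rightarrow> Lop p k I)"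

definition pideal :: "nat \<Rightarrow> (nat \<Rightarrow> int) set" where
  "pideal p = {constR 0 (int p * n) | n. True}"

text \<open>A word o_1 o_2 ... o_n of operators, read as a composition (rightmost applied
  first) to (p); the result is an ideal of R_n.\<close>
fun word_ideal :: "nat \<Rightarrow> opSL list \<Rightarrow> (nat \<Rightarrow> int) set" where
  "word_ideal p [] = pideal p"
| "word_ideal p (op1 # w) = apply_op p op1 (Suc (length w)) (word_ideal p w)"

definition SL_word :: "nat list \<Rightarrow> nat list \<Rightarrow> opSL list" where
  "SL_word a b = concat (map (\<lambda>(ai, bi). replicate ai OpS @ replicate bi OpL) (zip a b))"

definition F_el :: "nat \<Rightarrow> nat \<Rightarrow> nat \<Rightarrow> nat \<Rightarrow> int" where
  "F_el p l i = (\<lambda>m. basisX l i m - constR l (int p ^ (l - i)) m)"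

definition J_ideal :: "nat \<Rightarrow> nat \<Rightarrow> nat \<Rightarrow> int \<Rightarrow> (nat \<Rightarrow> int) set" where
  "J_ideal p l k x = (if k \<le> l - 1 \<and> k < l
     then gen_idealR p l (insert (constR l x) {F_el p l i | i. k \<le> i \<and> i \<le> l - 1})
     else {mulR p l (constR l x) y | y. y \<in> carrier_R l})"

end

theory Submission
  imports Defs "HOL-Number_Theory.Number_Theory"
begin

text \<open>
  R_k is the Burnside ring of the cyclic group of order p^k, X_{k,i} being the transitive set
  with p^(k-i) elements; counting elements gives a ring homomorphism cardR : R_k \<rightarrow> \<int>.
  The operators are compatible with it: cardR \<circ> res = cardR, cardR \<circ> ind = p \<cdot> cardR and
  cardR \<circ> jnd = cardR^p. Hence L maps the preimage of d\<int> to the preimage of d\<int>, while S maps the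
  preimage of p^j\<int> (j \<ge> 1) to the preimage of p^(j+1)\<int>: the generators land there because
  p^(j+1) divides p^(jp), and they generate it because jnd of an element with top coefficient p
  has top coefficient p, while ind hits everything with vanishing top coefficient. Starting from
  (p), a word with k letters S and length l therefore yields the preimage of p^(k+1)\<int> in R_l,
  which is J_{l,0}(p^(k+1)) since the F_{l,i} span the kernel of cardR.
\<close>

lemma prime_dvd_power_minus_self_int:
  fixes x :: int
  assumes "prime p"
  shows "int p dvd x ^ p - x"
proof -
  have p_pos: "p > 0" using assms prime_gt_0_nat by blast
  have fermat_nat: "[a ^ p = a] (mod p)" for a :: nat
  proof (cases "p dvd a")
    case True
    then have "p dvd a ^ p" using p_pos by (metis dvd_power dvd_trans)
    with True show ?thesis by (simp add: cong_def)
  next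
    case False
    then have "[a ^ (p - 1) * a = 1 * a] (mod p)"
      using fermat_theorem[OF assms] cong_scalar_right by blast
    moreover have "a ^ (p - 1) * a = a ^ p"
      using p_pos by (simp add: power_eq_if)
    ultimately show ?thesis by simp
  qed
  have x_cong: "[x = int (nat (x mod int p))] (mod int p)"
    using p_pos by (simp add: cong_def)
  have "[int (nat (x mod int p)) ^ p = int (nat (x mod int p))] (mod int p)"
    using fermat_nat by (metis cong_int_iff of_nat_power)
  then have "[x ^ p = x] (mod int p)"
    by (meson cong_pow cong_sym cong_trans x_cong)
  then show ?thesis by (simp add: cong_iff_dvd_diff)
qed

lemma prime_power_dvd_power_diff:
  fixes a b :: int
  assumes "prime p" "e \<ge> 1" "int p ^ e dvd a - b"
  shows "int p ^ Suc e dvd a ^ p - b ^ p"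
proof -
  have factor: "a ^ p - b ^ p = (a - b) * (\<Sum>i<p. b ^ (p - Suc i) * a ^ i)"
    by (rule power_diff_sumr2)
  have "int p dvd int p ^ e" using assms(2) by simp
  then have ab: "[a = b] (mod int p)" using assms(3) dvd_trans cong_iff_dvd_diff by blast
  have "[(\<Sum>i<p. b ^ (p - Suc i) * a ^ i) = (\<Sum>i<p. b ^ (p - Suc i) * b ^ i)] (mod int p)"
    by (intro cong_sum cong_mult cong_refl cong_pow ab)
  also have "(\<Sum>i<p. b ^ (p - Suc i) * b ^ i) = (\<Sum>i<p. b ^ (p - 1))"
    by (intro sum.cong refl) (simp add: power_add[symmetric])
  also have "\<dots> = int p * b ^ (p - 1)" by simp
  finally have "int p dvd (\<Sum>i<p. b ^ (p - Suc i) * a ^ i)"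
    by (simp add: cong_dvd_iff)
  then have "int p ^ e * int p dvd (a - b) * (\<Sum>i<p. b ^ (p - Suc i) * a ^ i)"
    using assms(3) mult_dvd_mono by blast
  then show ?thesis using factor by (simp add: mult.commute)
qed

definition cardR :: "nat \<Rightarrow> nat \<Rightarrow> (nat \<Rightarrow> int) \<Rightarrow> int" where
  "cardR p k x = (\<Sum>i\<le>k. x i * int p ^ (k - i))"

definition card_dvd_ideal :: "nat \<Rightarrow> nat \<Rightarrow> int \<Rightarrow> (nat \<Rightarrow> int) set" where
  "card_dvd_ideal p k d = {x \<in> carrier_R k. d dvd cardR p k x}"

lemma cardR_mulR: "cardR p k (mulR p k x y) = cardR p k x * cardR p k y"
proof -
  have "cardR p k (mulR p k x y) = (\<Sum>m\<le>k. \<Sum>i\<le>k. \<Sum>j\<le>k.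
      if min i j = m then x i * y j * int p ^ (k - max i j) * int p ^ (k - m) else 0)"
    unfolding cardR_def mulR_def sum_distrib_right by (intro sum.cong refl) simp
  also have "\<dots> = (\<Sum>i\<le>k. \<Sum>m\<le>k. \<Sum>j\<le>k.
      if min i j = m then x i * y j * int p ^ (k - max i j) * int p ^ (k - m) else 0)"
    by (rule sum.swap)
  also have "\<dots> = (\<Sum>i\<le>k. \<Sum>j\<le>k. \<Sum>m\<le>k.
      if min i j = m then x i * y j * int p ^ (k - max i j) * int p ^ (k - m) else 0)"
    by (intro sum.cong refl sum.swap)
  also have "\<dots> = (\<Sum>i\<le>k. \<Sum>j\<le>k. x i * y j * int p ^ (k - max i j) * int p ^ (k - min i j))"
    by (intro sum.cong refl) auto
  also have "\<dots> = (\<Sum>i\<le>k. \<Sum>j\<le>k. (x i * int p ^ (k - i)) * (y j * int p ^ (k - j)))"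
    by (intro sum.cong refl) (auto simp: min_def max_def algebra_simps)
  also have "\<dots> = cardR p k x * cardR p k y"
    by (simp add: cardR_def sum_product)
  finally show ?thesis .
qed

lemma cardR_add: "cardR p k (\<lambda>m. x m + y m) = cardR p k x + cardR p k y"
  unfolding cardR_def by (simp add: distrib_right sum.distrib)

lemma cardR_diff: "cardR p k (\<lambda>m. x m - y m) = cardR p k x - cardR p k y"
  unfolding cardR_def by (simp add: left_diff_distrib sum_subtractf)

lemma cardR_scale: "cardR p k (\<lambda>m. c * x m) = c * cardR p k x"
  unfolding cardR_def by (simp add: sum_distrib_left mult.assoc)

lemma cardR_constR: "cardR p k (constR k c) = c"
proof -
  have "cardR p k (constR k c) = (\<Sum>m\<le>k. if m = k then c else 0)"
    unfolding cardR_def constR_def by (intro sum.cong refl) auto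
  then show ?thesis by simp
qed

lemma cardR_basisX: "i \<le> l \<Longrightarrow> cardR p l (basisX l i) = int p ^ (l - i)"
proof -
  assume "i \<le> l"
  then have "cardR p l (basisX l i) = (\<Sum>m\<le>l. if m = i then int p ^ (l - i) else 0)"
    unfolding cardR_def basisX_def by (intro sum.cong refl) auto
  with \<open>i \<le> l\<close> show ?thesis by simp
qed

lemma cardR_F_el: "i \<le> l \<Longrightarrow> cardR p l (F_el p l i) = 0"
  unfolding F_el_def cardR_diff by (simp add: cardR_basisX cardR_constR)

lemma cardR_Suc: "cardR p (Suc k) y = y (Suc k) + int p * cardR p k y"
  unfolding cardR_def
  by (simp add: sum_distrib_left Suc_diff_le mult.assoc mult.left_commute)

lemma cardR_resR: "cardR p k (resR p (Suc k) k x) = cardR p (Suc k) x"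
proof -
  have res_basis: "(\<Sum>m\<le>k. resX p (Suc k) k i m * int p ^ (k - m)) = int p ^ (Suc k - i)"
    if "i \<le> Suc k" for i
  proof (cases "i \<le> k")
    case True
    then have "(\<Sum>m\<le>k. resX p (Suc k) k i m * int p ^ (k - m))
        = (\<Sum>m\<le>k. if m = i then int p * int p ^ (k - m) else 0)"
      by (intro sum.cong refl) (auto simp: resX_def basisX_def)
    with True show ?thesis by (simp add: Suc_diff_le)
  next
    case False
    with that have "i = Suc k" by simp
    then have "(\<Sum>m\<le>k. resX p (Suc k) k i m * int p ^ (k - m))
        = (\<Sum>m\<le>k. if m = k then 1 else 0)"
      by (intro sum.cong refl) (auto simp: resX_def constR_def)
    with \<open>i = Suc k\<close> show ?thesis by simp
  qed
  have "cardR p k (resR p (Suc k) k x)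
      = (\<Sum>i\<le>Suc k. \<Sum>m\<le>k. x i * (resX p (Suc k) k i m * int p ^ (k - m)))"
    unfolding cardR_def resR_def sum_distrib_right by (subst sum.swap) (simp add: mult.assoc)
  also have "\<dots> = (\<Sum>i\<le>Suc k. x i * int p ^ (Suc k - i))"
    by (intro sum.cong refl) (simp add: sum_distrib_left[symmetric] res_basis)
  finally show ?thesis unfolding cardR_def .
qed

lemma cardR_indR: "cardR p (Suc k) (indR k (Suc k) x) = int p * cardR p k x"
  unfolding cardR_Suc by (simp add: indR_def cardR_def)

lemma cardR_jndR:
  assumes "prime p"
  shows "cardR p (Suc k) (jndR p k (Suc k) x) = cardR p k x ^ p"
proof -
  define A where "A m = (\<Sum>s\<in>{m..k}. x s * int p ^ (k - s))" for m
  have A_step: "A m - A (Suc m) = x m * int p ^ (k - m)" if "m \<le> k" for m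
    unfolding A_def using that by (simp add: sum.atLeast_Suc_atMost)
  have low: "jndR p k (Suc k) x m * int p ^ (Suc k - m) = A m ^ p - A (Suc m) ^ p"
    if "m < k" for m
  proof -
    have "jndR p k (Suc k) x m = (A m ^ p - A (Suc m) ^ p) div int p ^ (Suc k - m)"
      using that unfolding jndR_def A_def by simp
    moreover have "int p ^ Suc (k - m) dvd A m ^ p - A (Suc m) ^ p"
      using that by (intro prime_power_dvd_power_diff assms) (simp_all add: A_step)
    ultimately show ?thesis using that by (simp add: Suc_diff_le)
  qed
  have mid: "jndR p k (Suc k) x k * int p = x k ^ p - x k"
    using prime_dvd_power_minus_self_int[OF assms] by (simp add: jndR_def)
  have top: "jndR p k (Suc k) x (Suc k) = A k"
    unfolding jndR_def A_def by simp
  have "cardR p (Suc k) (jndR p k (Suc k) x)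
      = (\<Sum>m<k. jndR p k (Suc k) x m * int p ^ (Suc k - m)) + jndR p k (Suc k) x k * int p
        + jndR p k (Suc k) x (Suc k)"
    unfolding cardR_def by (simp add: lessThan_Suc_atMost[symmetric])
  also have "(\<Sum>m<k. jndR p k (Suc k) x m * int p ^ (Suc k - m)) = (\<Sum>m<k. A m ^ p - A (Suc m) ^ p)"
    by (intro sum.cong refl) (simp add: low)
  also have "\<dots> = A 0 ^ p - A k ^ p"
    by (rule sum_lessThan_telescope')
  also have "A 0 = cardR p k x"
    unfolding A_def cardR_def by (simp add: atLeast0AtMost)
  finally show ?thesis using mid top by (simp add: A_def)
qed

lemma mulR_in_carrier_R: "mulR p k x y \<in> carrier_R k"
  unfolding carrier_R_def mulR_def by (auto intro!: sum.neutral)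

lemma mulR_constR:
  assumes "v \<in> carrier_R k"
  shows "mulR p k (constR k c) v = (\<lambda>m. c * v m)"
proof
  fix m
  have "mulR p k (constR k c) v m = (\<Sum>i\<le>k. if i = k then
      (\<Sum>j\<le>k. if min k j = m then c * v j * int p ^ (k - max k j) else 0) else 0)"
    unfolding mulR_def constR_def by (intro sum.cong refl) (auto intro: sum.neutral)
  also have "\<dots> = (\<Sum>j\<le>k. if min k j = m then c * v j * int p ^ (k - max k j) else 0)"
    by simp
  also have "\<dots> = (\<Sum>j\<le>k. if j = m then c * v j else 0)"
    by (intro sum.cong refl) (auto simp: min_def max_def)
  also have "\<dots> = c * v m"
    using assms by (simp add: carrier_R_def)
  finally show "mulR p k (constR k c) v m = c * v m" .
qed

lemma constR_in_carrier_R: "constR k c \<in> carrier_R k"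
  by (simp add: carrier_R_def constR_def)

lemma mulR_constR_constR: "mulR p k (constR k c) (constR k d) = constR k (c * d)"
  unfolding mulR_constR[OF constR_in_carrier_R] by (auto simp: constR_def)

lemma is_idealR_carrier_R: "is_idealR p k (carrier_R k)"
proof -
  have "(\<lambda>m. 0) \<in> carrier_R k" by (simp add: carrier_R_def)
  moreover have "addR x y \<in> carrier_R k" if "x \<in> carrier_R k" "y \<in> carrier_R k" for x y
    using that by (simp add: carrier_R_def addR_def)
  ultimately show ?thesis by (auto simp: is_idealR_def mulR_in_carrier_R)
qed

lemma is_idealR_card_dvd_ideal: "is_idealR p k (card_dvd_ideal p k d)"
proof -
  have "addR x y \<in> card_dvd_ideal p k d"
    if "x \<in> card_dvd_ideal p k d" "y \<in> card_dvd_ideal p k d" for x y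
    using that unfolding card_dvd_ideal_def carrier_R_def addR_def by (simp add: cardR_add)
  moreover have "mulR p k y x \<in> card_dvd_ideal p k d" if "x \<in> card_dvd_ideal p k d" for x y
    using that mulR_in_carrier_R cardR_mulR unfolding card_dvd_ideal_def by simp
  ultimately show ?thesis unfolding is_idealR_def
    by (auto simp: card_dvd_ideal_def carrier_R_def cardR_def)
qed

lemma idealR_add: "is_idealR p k I \<Longrightarrow> x \<in> I \<Longrightarrow> y \<in> I \<Longrightarrow> (\<lambda>m. x m + y m) \<in> I"
  unfolding is_idealR_def addR_def by blast

lemma idealR_scale:
  assumes "is_idealR p k I" "x \<in> I"
  shows "(\<lambda>m. c * x m) \<in> I"
proof -
  have "x \<in> carrier_R k"
    using assms by (auto simp: is_idealR_def)
  then show ?thesis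
    using assms constR_in_carrier_R mulR_constR[of x k p c] unfolding is_idealR_def by metis
qed

lemma idealR_lincomb:
  fixes n :: nat
  assumes "is_idealR p k I" "\<And>i. i < n \<Longrightarrow> f i \<in> I"
  shows "(\<lambda>m. \<Sum>i<n. c i * f i m) \<in> I"
  using assms(2)
proof (induction n)
  case 0
  then show ?case using assms(1) by (simp add: is_idealR_def)
next
  case (Suc n)
  then show ?case
    using idealR_add[OF assms(1)] idealR_scale[OF assms(1)] by simp
qed

lemma is_idealR_gen_idealR: "A \<subseteq> carrier_R k \<Longrightarrow> is_idealR p k (gen_idealR p k A)"
  using is_idealR_carrier_R[of p k]
  unfolding is_idealR_def gen_idealR_def by (auto 4 3)

lemma gen_idealR_self: "A \<subseteq> gen_idealR p k A"
  unfolding gen_idealR_def by blast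

lemma gen_idealR_minimal: "is_idealR p k I \<Longrightarrow> A \<subseteq> I \<Longrightarrow> gen_idealR p k A \<subseteq> I"
  unfolding gen_idealR_def by blast

lemma Lop_card_dvd_ideal: "Lop p (Suc k) (card_dvd_ideal p k d) = card_dvd_ideal p (Suc k) d"
proof -
  have "resR p (Suc k) k x \<in> carrier_R k" for x
    unfolding carrier_R_def resR_def
    by (auto intro!: sum.neutral simp: resX_def basisX_def constR_def)
  then show ?thesis
    unfolding Lop_def card_dvd_ideal_def by (auto simp: cardR_resR)
qed

lemma indR_in_card_dvd_ideal:
  assumes "x \<in> card_dvd_ideal p k d"
  shows "indR k (Suc k) x \<in> card_dvd_ideal p (Suc k) (int p * d)"
proof -
  have "indR k (Suc k) x \<in> carrier_R (Suc k)" by (simp add: carrier_R_def indR_def)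
  moreover have "int p * d dvd cardR p (Suc k) (indR k (Suc k) x)"
    using assms by (simp add: card_dvd_ideal_def cardR_indR)
  ultimately show ?thesis by (simp add: card_dvd_ideal_def)
qed

lemma jndR_in_card_dvd_ideal:
  assumes "prime p" "0 < j" "x \<in> card_dvd_ideal p k (int p ^ j)"
  shows "jndR p k (Suc k) x \<in> card_dvd_ideal p (Suc k) (int p ^ Suc j)"
proof -
  have "(int p ^ j) ^ p dvd cardR p k x ^ p"
    using assms(3) by (simp add: card_dvd_ideal_def dvd_power_same)
  moreover have "int p ^ Suc j dvd (int p ^ j) ^ p"
  proof -
    have "j * 2 \<le> j * p" using prime_ge_2_nat[OF assms(1)] by simp
    then have "Suc j \<le> j * p" using assms(2) by linarith
    then show ?thesis unfolding power_mult[symmetric] by (rule le_imp_power_dvd)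
  qed
  ultimately show ?thesis
    using cardR_jndR[OF assms(1)] unfolding card_dvd_ideal_def carrier_R_def jndR_def
    by (auto intro: dvd_trans)
qed

lemma card_dvd_ideal_top_coeff:
  assumes "i \<le> k"
  obtains x where "x \<in> card_dvd_ideal p k (int p ^ Suc i)" "x k = int p"
proof (cases k)
  case 0
  with assms have "constR 0 (int p) \<in> card_dvd_ideal p k (int p ^ Suc i)"
    using cardR_constR[of p 0 "int p"] by (simp add: card_dvd_ideal_def carrier_R_def constR_def)
  with 0 that show ?thesis by (simp add: constR_def)
next
  case (Suc k')
  let ?x = "\<lambda>m. - F_el p k k' m"
  have "?x \<in> card_dvd_ideal p k (int p ^ Suc i)"
    using Suc cardR_scale[of p k "-1" "F_el p k k'"] cardR_F_el[of k' k p]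
    by (simp add: card_dvd_ideal_def carrier_R_def F_el_def basisX_def constR_def)
  with Suc that show ?thesis by (simp add: F_el_def basisX_def constR_def)
qed

lemma card_dvd_ideal_Suc_decomp:
  assumes "prime p" "0 < j"
    and x0: "x0 \<in> card_dvd_ideal p k (int p ^ j)" "x0 k = int p"
    and y: "y \<in> card_dvd_ideal p (Suc k) (int p ^ Suc j)"
  obtains t z where "z \<in> card_dvd_ideal p k (int p ^ j)"
    and "y = (\<lambda>m. t * jndR p k (Suc k) x0 m + indR k (Suc k) z m)"
proof -
  have y_car: "y \<in> carrier_R (Suc k)" and y_dvd: "int p ^ Suc j dvd cardR p (Suc k) y"
    using y by (auto simp: card_dvd_ideal_def)
  have "int p dvd cardR p (Suc k) y" using y_dvd by (simp add: dvd_mult_left)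
  then have "int p dvd y (Suc k)" unfolding cardR_Suc
    by (metis dvd_add_right_iff dvd_triv_left add.commute)
  then obtain t where t: "y (Suc k) = int p * t" by blast
  define v where "v m = y m - t * jndR p k (Suc k) x0 m" for m
  define z where "z m = (if m \<le> k then v m else 0)" for m
  have v_top: "v m = 0" if "m \<ge> Suc k" for m
    using that y_car t x0(2) by (auto simp: v_def jndR_def carrier_R_def)
  have ind_z: "indR k (Suc k) z = v"
  proof
    fix m show "indR k (Suc k) z m = v m"
      using v_top[of m] by (auto simp: indR_def z_def)
  qed
  have "int p ^ Suc j dvd cardR p (Suc k) (jndR p k (Suc k) x0)"
    using jndR_in_card_dvd_ideal[OF assms(1,2) x0(1)] by (simp add: card_dvd_ideal_def)
  then have "int p ^ Suc j dvd cardR p (Suc k) v"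
    using y_dvd unfolding v_def cardR_diff cardR_scale by simp
  then have "int p * int p ^ j dvd int p * cardR p k z"
    by (simp add: ind_z[symmetric] cardR_indR)
  then have "int p ^ j dvd cardR p k z"
    using prime_gt_0_nat[OF assms(1)] by simp
  then have "z \<in> card_dvd_ideal p k (int p ^ j)"
    by (simp add: card_dvd_ideal_def carrier_R_def z_def)
  moreover have "y = (\<lambda>m. t * jndR p k (Suc k) x0 m + indR k (Suc k) z m)"
    by (simp add: ind_z v_def)
  ultimately show ?thesis by (rule that)
qed

lemma Sop_card_dvd_ideal:
  assumes "prime p" "i \<le> k"
  shows "Sop p (Suc k) (card_dvd_ideal p k (int p ^ Suc i))
    = card_dvd_ideal p (Suc k) (int p ^ Suc (Suc i))"
    (is "Sop p (Suc k) ?I = ?J")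
proof -
  let ?G = "indR k (Suc k) ` ?I \<union> jndR p k (Suc k) ` ?I"
  have G_sub: "?G \<subseteq> ?J"
    using indR_in_card_dvd_ideal[of _ p k "int p ^ Suc i", folded power_Suc]
      jndR_in_card_dvd_ideal[OF assms(1), of "Suc i" _ k]
    by blast
  have "?J \<subseteq> carrier_R (Suc k)" by (auto simp: card_dvd_ideal_def)
  with G_sub have ideal_G: "is_idealR p (Suc k) (gen_idealR p (Suc k) ?G)"
    by (intro is_idealR_gen_idealR) blast
  have "?J \<subseteq> gen_idealR p (Suc k) ?G"
  proof
    fix y assume "y \<in> ?J"
    obtain x0 where x0: "x0 \<in> ?I" "x0 k = int p"
      using card_dvd_ideal_top_coeff[OF assms(2)] by blast
    obtain t z where "z \<in> ?I" and y: "y = (\<lambda>m. t * jndR p k (Suc k) x0 m + indR k (Suc k) z m)"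
      using card_dvd_ideal_Suc_decomp[OF assms(1) zero_less_Suc x0 \<open>y \<in> ?J\<close>] by blast
    then have "indR k (Suc k) z \<in> gen_idealR p (Suc k) ?G"
      "jndR p k (Suc k) x0 \<in> gen_idealR p (Suc k) ?G"
      using gen_idealR_self[of ?G p "Suc k"] x0(1) by blast+
    then show "y \<in> gen_idealR p (Suc k) ?G"
      unfolding y by (intro idealR_add[OF ideal_G] idealR_scale[OF ideal_G])
  qed
  moreover have "gen_idealR p (Suc k) ?G \<subseteq> ?J"
    by (rule gen_idealR_minimal[OF is_idealR_card_dvd_ideal G_sub])
  ultimately show ?thesis by (simp add: Sop_def set_eq_subset)
qed

lemma carrier_R_0: "carrier_R 0 = range (constR 0)"
proof (intro equalityI subsetI)
  fix x assume "x \<in> carrier_R 0"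
  then have "x = constR 0 (x 0)" by (auto simp: carrier_R_def constR_def)
  then show "x \<in> range (constR 0)" by blast
qed (auto simp: carrier_R_def constR_def)

lemma card_dvd_ideal_0: "card_dvd_ideal p 0 d = range (\<lambda>n. constR 0 (d * n))"
  unfolding card_dvd_ideal_def carrier_R_0 dvd_def by (auto simp: cardR_constR)

lemma pideal_eq_card_dvd_ideal: "pideal p = card_dvd_ideal p 0 (int p)"
  by (auto simp: pideal_def card_dvd_ideal_0)

lemma carrier_R_eq_F_el_sum:
  assumes "y \<in> carrier_R l"
  shows "y = (\<lambda>m. (\<Sum>i<l. y i * F_el p l i m) + constR l (cardR p l y) m)"
proof
  fix m
  consider "m < l" | "m = l" | "l < m" by linarith
  then show "y m = (\<Sum>i<l. y i * F_el p l i m) + constR l (cardR p l y) m"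
  proof cases
    case 1
    then have "(\<Sum>i<l. y i * F_el p l i m) = (\<Sum>i<l. if i = m then y i else 0)"
      by (intro sum.cong refl) (auto simp: F_el_def basisX_def constR_def)
    with 1 show ?thesis by (simp add: constR_def)
  next
    case 2
    then have "(\<Sum>i<l. y i * F_el p l i m) = - (\<Sum>i<l. y i * int p ^ (l - i))"
      by (simp add: F_el_def basisX_def constR_def sum_negf[symmetric])
    moreover have "cardR p l y = (\<Sum>i<l. y i * int p ^ (l - i)) + y l"
      by (simp add: cardR_def lessThan_Suc_atMost[symmetric])
    ultimately show ?thesis using 2 by (simp add: constR_def)
  next
    case 3
    then show ?thesis
      using assms by (auto simp: carrier_R_def F_el_def basisX_def constR_def)
  qed
qed

lemma J_ideal_0_eq_card_dvd_ideal: "J_ideal p l 0 d = card_dvd_ideal p l d"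
proof (cases "l = 0")
  case True
  have "J_ideal p 0 0 d = range (\<lambda>n. mulR p 0 (constR 0 d) (constR 0 n))"
    by (auto simp: J_ideal_def carrier_R_0)
  also have "\<dots> = range (\<lambda>n. constR 0 (d * n))"
    by (simp add: mulR_constR_constR)
  finally show ?thesis using True by (simp add: card_dvd_ideal_0)
next
  case False
  let ?G = "insert (constR l d) {F_el p l i | i. 0 \<le> i \<and> i \<le> l - 1}"
  have F_el_mem: "F_el p l i \<in> card_dvd_ideal p l d" if "i \<le> l" for i
    using cardR_F_el[OF that]
    by (simp add: card_dvd_ideal_def carrier_R_def F_el_def basisX_def constR_def)
  have "constR l d \<in> card_dvd_ideal p l d"
    using cardR_constR[of p l d] by (simp add: card_dvd_ideal_def carrier_R_def constR_def)
  with F_el_mem have G_sub: "?G \<subseteq> card_dvd_ideal p l d" by auto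
  then have ideal_G: "is_idealR p l (gen_idealR p l ?G)"
    by (intro is_idealR_gen_idealR) (auto simp: card_dvd_ideal_def)
  have "card_dvd_ideal p l d \<subseteq> gen_idealR p l ?G"
  proof
    fix y assume "y \<in> card_dvd_ideal p l d"
    then obtain c where y: "y \<in> carrier_R l" "cardR p l y = d * c"
      unfolding card_dvd_ideal_def dvd_def by blast
    have "F_el p l i \<in> gen_idealR p l ?G" if "i < l" for i
      using that gen_idealR_self[of ?G p l] by fastforce
    then have "(\<lambda>m. \<Sum>i<l. y i * F_el p l i m) \<in> gen_idealR p l ?G"
      by (rule idealR_lincomb[OF ideal_G])
    moreover have "(\<lambda>m. c * constR l d m) \<in> gen_idealR p l ?G"
      using gen_idealR_self[of ?G p l] by (intro idealR_scale[OF ideal_G]) auto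
    ultimately have "(\<lambda>m. (\<Sum>i<l. y i * F_el p l i m) + c * constR l d m) \<in> gen_idealR p l ?G"
      by (rule idealR_add[OF ideal_G])
    also have "(\<lambda>m. (\<Sum>i<l. y i * F_el p l i m) + c * constR l d m)
        = (\<lambda>m. (\<Sum>i<l. y i * F_el p l i m) + constR l (cardR p l y) m)"
      by (auto simp: y(2) constR_def)
    also have "\<dots> = y"
      by (rule carrier_R_eq_F_el_sum[OF y(1), symmetric])
    finally show "y \<in> gen_idealR p l ?G" .
  qed
  with gen_idealR_minimal[OF is_idealR_card_dvd_ideal G_sub] False show ?thesis
    by (simp add: J_ideal_def)
qed

lemma word_ideal_eq_card_dvd_ideal:
  assumes "prime p"
  shows "word_ideal p w = card_dvd_ideal p (length w) (int p ^ Suc (length (filter ((=) OpS) w)))"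
proof (induction w)
  case Nil
  then show ?case by (simp add: pideal_eq_card_dvd_ideal)
next
  case (Cons op1 w)
  have "length (filter ((=) OpS) w) \<le> length w" by (rule length_filter_le)
  with Cons.IH show ?case
    using Sop_card_dvd_ideal[OF assms] Lop_card_dvd_ideal
    by (cases op1) (simp_all add: apply_op_def del: power_Suc)
qed

lemma length_SL_word: "length a = length b \<Longrightarrow> length (SL_word a b) = sum_list a + sum_list b"
  by (induction a b rule: list_induct2) (simp_all add: SL_word_def)

lemma length_filter_OpS_SL_word:
  "length a = length b \<Longrightarrow> length (filter ((=) OpS) (SL_word a b)) = sum_list a"
  by (induction a b rule: list_induct2) (simp_all add: SL_word_def filter_replicate)

theorem proposition6:
  fixes p r l s k :: nat and a b :: "nat list"
  assumes "prime p" and "l \<le> r"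
    and "length a = s" and "length b = s"
    and "sum_list a + sum_list b = l"
    and "k = sum_list a"
  shows "word_ideal p (SL_word a b) = word_ideal p (replicate k OpS @ replicate (l - k) OpL)
       \<and> word_ideal p (replicate k OpS @ replicate (l - k) OpL)
           = word_ideal p (replicate (l - k) OpL @ replicate k OpS)
       \<and> word_ideal p (replicate (l - k) OpL @ replicate k OpS)
           = J_ideal p l 0 (int p ^ (k + 1))"
proof -
  have "length a = length b" using assms(3,4) by simp
  then show ?thesis
    using assms(5,6)
    by (simp add: word_ideal_eq_card_dvd_ideal[OF assms(1)] J_ideal_0_eq_card_dvd_ideal
        length_SL_word length_filter_OpS_SL_word filter_replicate)
qed

end
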